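(* Let $n>24$, $0<\epsilon<\frac13$, $\delta>0$, $s>0$, and let $m=\epsilon^{-2}n^{1+\delta}$ (assumed to be an integer). Then $$\mathsf P\left\{ x\in U^m:\ \left|\sum_{i=1}^n \frac{k_i(x)(k_i(x)-1)}{m(m-1)}\cdot\frac{1}{\|p\|^2}-1\right|\le \epsilon\left(3+\frac{6s}{n^{\delta/2}}+\frac{5s^2\epsilon}{n^{\delta}}\right)\right\}\ \ge\ 1-\frac{10}{9}e^{-s^2/4}.$$
   Context: Standing setup: $U$ is a finite set (the key space) with a probability measure $q$; $T=\{1,\dots,n\}$; $h:U\to T$ is an arbitrary function. $p_i=\sum_{u\in h^{-1}(i)}q(u)$ and $\|p\|^2=\sum_{i=1}^n p_i^2$. $U^m$ carries the product measure $q^m$ (keys chosen independently), and $\mathsf P$ denotes probability under $q^m$. For $x=(x_1,\dots,x_m)\in U^m$, $k_i(x)=|\{j: h(x_j)=i\}|$ (number of keys of $x$ hashed to slot $i$, with multiplicity). *)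

theory Defs
  imports Complex_Main "HOL-Library.FuncSet"
begin

definition slot_prob :: "'a set \<Rightarrow> ('a \<Rightarrow> real) \<Rightarrow> ('a \<Rightarrow> nat) \<Rightarrow> nat \<Rightarrow> real" where
  "slot_prob U q h i = (\<Sum>u\<in>{u\<in>U. h u = i}. q u)"

definition norm_p_sq :: "'a set \<Rightarrow> ('a \<Rightarrow> real) \<Rightarrow> ('a \<Rightarrow> nat) \<Rightarrow> nat \<Rightarrow> real" where
  "norm_p_sq U q h n = (\<Sum>i=1..n. (slot_prob U q h i)^2)"

definition kcount :: "('a \<Rightarrow> nat) \<Rightarrow> nat \<Rightarrow> (nat \<Rightarrow> 'a) \<Rightarrow> nat \<Rightarrow> nat" where
  "kcount h m x i = card {j\<in>{..<m}. h (x j) = i}"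

definition prob_prod :: "'a set \<Rightarrow> ('a \<Rightarrow> real) \<Rightarrow> nat \<Rightarrow> ((nat \<Rightarrow> 'a) \<Rightarrow> bool) \<Rightarrow> real" where
  "prob_prod U q m P = (\<Sum>x\<in>{x \<in> Pi\<^sub>E {..<m} (\<lambda>_. U). P x}. \<Prod>j<m. q (x j))"

end

theory Submission
  imports Defs "HOL-Analysis.Convex" "HOL-Number_Theory.Cong"
begin

(* Half of \<Sum>i k_i (k_i - 1) counts the colliding pairs a < b of positions.  These pairs split
   into the m classes {a + b = d (mod m)}; each class is a matching of at least (m - 2)/2 pairs,
   so inside one class the collision indicators are independent Bernoulli(\<parallel>p\<parallel>^2) variables
   and their exponential moment is an explicit power.  Jensen's inequality for exp over the
   classes gives E exp(l X) \<le> exp(l + l^2/K) for the normalised estimator X and all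
   l \<le> K = (m - 2) \<parallel>p\<parallel>^2 / 2, and a two-sided Chernoff bound follows.  Since \<parallel>p\<parallel>^2 \<ge> 1/n,
   the stated m makes K large enough. *)

lemma sum_PiE_insert:
  assumes "a \<notin> I"
  shows "(\<Sum>x\<in>Pi\<^sub>E (insert a I) (\<lambda>_. U). f x) = (\<Sum>u\<in>U. \<Sum>y\<in>Pi\<^sub>E I (\<lambda>_. U). f (y(a:=u)))"
proof -
  have "(\<Sum>x\<in>Pi\<^sub>E (insert a I) (\<lambda>_. U). f x)
      = (\<Sum>p\<in>U \<times> Pi\<^sub>E I (\<lambda>_. U). f ((\<lambda>(y,g). g(a:=y)) p))"
    unfolding PiE_insert_eq using inj_combinator[OF assms, of "\<lambda>_. U"]
    by (subst sum.reindex) auto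
  also have "\<dots> = (\<Sum>u\<in>U. \<Sum>y\<in>Pi\<^sub>E I (\<lambda>_. U). f (y(a:=u)))"
    by (simp add: sum.cartesian_product split_def)
  finally show ?thesis .
qed

lemma sum_PiE_prod_eq_1:
  fixes q :: "'a \<Rightarrow> 'b::comm_semiring_1"
  assumes "finite I" "finite U" "(\<Sum>u\<in>U. q u) = 1"
  shows "(\<Sum>x\<in>Pi\<^sub>E I (\<lambda>_. U). \<Prod>j\<in>I. q (x j)) = 1"
  using prod_sum_PiE[of I "\<lambda>_. U" "\<lambda>_ u. q u"] assms by simp

lemma prob_prod_not:
  assumes "finite U" "(\<Sum>u\<in>U. q u) = 1"
  shows "prob_prod U q m P = 1 - prob_prod U q m (\<lambda>x. \<not> P x)"
proof -
  let ?S = "Pi\<^sub>E {..<m} (\<lambda>_. U)"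
  have "finite ?S" using assms(1) by (simp add: finite_PiE)
  then have "prob_prod U q m P + prob_prod U q m (\<lambda>x. \<not> P x)
      = (\<Sum>x\<in>{x\<in>?S. P x} \<union> {x\<in>?S. \<not> P x}. \<Prod>j<m. q (x j))"
    unfolding prob_prod_def by (intro sum.union_disjoint[symmetric]) auto
  also have "\<dots> = (\<Sum>x\<in>?S. \<Prod>j<m. q (x j))" by (rule sum.cong) auto
  also have "\<dots> = 1" by (rule sum_PiE_prod_eq_1[OF finite_lessThan assms])
  finally show ?thesis by simp
qed

text \<open>Under a product measure, functions of pairwise disjoint pairs of coordinates are
  independent.\<close>

lemma sum_PiE_prod_matching:
  fixes F :: "'a \<Rightarrow> 'a \<Rightarrow> 'b::comm_semiring_1" and M :: "('i \<times> 'i) set"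
  assumes "finite M" "finite I" "finite U" "(\<Sum>u\<in>U. q u) = 1"
    and "\<forall>e\<in>M. fst e \<in> I \<and> snd e \<in> I \<and> fst e \<noteq> snd e"
    and "\<forall>e1\<in>M. \<forall>e2\<in>M. e1 \<noteq> e2 \<longrightarrow> {fst e1, snd e1} \<inter> {fst e2, snd e2} = {}"
  shows "(\<Sum>x\<in>Pi\<^sub>E I (\<lambda>_. U). (\<Prod>j\<in>I. q (x j)) * (\<Prod>e\<in>M. F (x (fst e)) (x (snd e))))
       = (\<Sum>u\<in>U. \<Sum>v\<in>U. q u * q v * F u v) ^ card M"
  using assms(1,2,5,6)
proof (induction M arbitrary: I rule: finite_induct)
  case empty
  then show ?case using sum_PiE_prod_eq_1[OF _ assms(3,4)] by simp
next
  case (insert e M)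
  define a where "a = fst e"
  define b where "b = snd e"
  define I' where "I' = I - {a,b}"
  have ab: "a \<in> I" "b \<in> I" "a \<noteq> b" using insert.prems unfolding a_def b_def by auto
  have I_eq: "I = insert a (insert b I')" using ab unfolding I'_def by auto
  have ab_notin: "a \<notin> insert b I'" "b \<notin> I'" using ab unfolding I'_def by auto
  have fin_I': "finite I'" using insert.prems unfolding I'_def by auto
  have M_avoids: "\<forall>e'\<in>M. fst e' \<noteq> a \<and> fst e' \<noteq> b \<and> snd e' \<noteq> a \<and> snd e' \<noteq> b"
  proof
    fix e' assume "e' \<in> M"
    with insert.hyps insert.prems(3) have "{fst e', snd e'} \<inter> {a, b} = {}"
      unfolding a_def b_def by auto
    then show "fst e' \<noteq> a \<and> fst e' \<noteq> b \<and> snd e' \<noteq> a \<and> snd e' \<noteq> b" by auto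
  qed
  let ?G = "\<lambda>x. (\<Prod>j\<in>I'. q (x j)) * (\<Prod>e\<in>M. F (x (fst e)) (x (snd e)))"
  have IH: "(\<Sum>z\<in>Pi\<^sub>E I' (\<lambda>_. U). ?G z) = (\<Sum>u\<in>U. \<Sum>v\<in>U. q u * q v * F u v) ^ card M"
    by (rule insert.IH[OF fin_I']) (use insert.prems M_avoids in \<open>auto simp: I'_def\<close>)
  have factor: "(\<Prod>j\<in>I. q ((z(b:=v, a:=u)) j))
        * (\<Prod>e\<in>insert e M. F ((z(b:=v, a:=u)) (fst e)) ((z(b:=v, a:=u)) (snd e)))
      = (q u * q v * F u v) * ?G z" for z u v
  proof -
    have "(\<Prod>j\<in>I'. q ((z(b:=v, a:=u)) j)) = (\<Prod>j\<in>I'. q (z j))"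
      using ab_notin by (intro prod.cong) auto
    then have "(\<Prod>j\<in>I. q ((z(b:=v, a:=u)) j)) = q u * (q v * (\<Prod>j\<in>I'. q (z j)))"
      unfolding I_eq using ab_notin fin_I' ab by simp
    moreover have "(\<Prod>e\<in>M. F ((z(b:=v, a:=u)) (fst e)) ((z(b:=v, a:=u)) (snd e)))
        = (\<Prod>e\<in>M. F (z (fst e)) (z (snd e)))"
      using M_avoids by (intro prod.cong) auto
    ultimately show ?thesis
      using insert.hyps ab unfolding a_def b_def by (simp add: algebra_simps)
  qed
  have "Pi\<^sub>E I (\<lambda>_. U) = Pi\<^sub>E (insert a (insert b I')) (\<lambda>_. U)" using I_eq by simp
  then have "(\<Sum>x\<in>Pi\<^sub>E I (\<lambda>_. U). (\<Prod>j\<in>I. q (x j)) * (\<Prod>e\<in>insert e M. F (x (fst e)) (x (snd e))))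
     = (\<Sum>u\<in>U. \<Sum>v\<in>U. \<Sum>z\<in>Pi\<^sub>E I' (\<lambda>_. U). (q u * q v * F u v) * ?G z)"
    by (simp only: sum_PiE_insert[OF ab_notin(1)] sum_PiE_insert[OF ab_notin(2)] factor)
  also have "\<dots> = (\<Sum>u\<in>U. \<Sum>v\<in>U. q u * q v * F u v) * (\<Sum>z\<in>Pi\<^sub>E I' (\<lambda>_. U). ?G z)"
    by (simp only: sum_distrib_left[symmetric] sum_distrib_right[symmetric])
  also have "\<dots> = (\<Sum>u\<in>U. \<Sum>v\<in>U. q u * q v * F u v) ^ card (insert e M)"
    using IH insert.hyps by simp
  finally show ?case .
qed

definition collision_probability :: "'a set \<Rightarrow> ('a \<Rightarrow> real) \<Rightarrow> ('a \<Rightarrow> 'b) \<Rightarrow> real" where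
  "collision_probability U q h = (\<Sum>u\<in>U. \<Sum>v\<in>U. q u * q v * (if h u = h v then 1 else 0))"

lemma sum_exp_collision_indicator:
  assumes "(\<Sum>u\<in>U. q u) = 1"
  shows "(\<Sum>u\<in>U. \<Sum>v\<in>U. q u * q v * exp (c * (if h u = h v then 1 else 0)))
       = 1 + collision_probability U q h * (exp c - 1)"
proof -
  have "(\<Sum>u\<in>U. \<Sum>v\<in>U. q u * q v * exp (c * (if h u = h v then 1 else 0)))
      = (\<Sum>u\<in>U. \<Sum>v\<in>U. q u * q v + (exp c - 1) * (q u * q v * (if h u = h v then 1 else 0)))"
    by (intro sum.cong) (auto simp: algebra_simps)
  also have "\<dots> = (\<Sum>u\<in>U. \<Sum>v\<in>U. q u * q v) + (exp c - 1) * collision_probability U q h"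
    by (simp add: collision_probability_def sum.distrib sum_distrib_left)
  also have "(\<Sum>u\<in>U. \<Sum>v\<in>U. q u * q v) = 1"
    using assms by (simp add: sum_distrib_left[symmetric] sum_distrib_right[symmetric])
  finally show ?thesis by (simp add: algebra_simps)
qed

lemma sum_PiE_exp_matching:
  fixes q :: "'a \<Rightarrow> real" and M :: "('i \<times> 'i) set"
  assumes "finite M" "finite I" "finite U" "(\<Sum>u\<in>U. q u) = 1"
    and "\<forall>e\<in>M. fst e \<in> I \<and> snd e \<in> I \<and> fst e \<noteq> snd e"
    and "\<forall>e1\<in>M. \<forall>e2\<in>M. e1 \<noteq> e2 \<longrightarrow> {fst e1, snd e1} \<inter> {fst e2, snd e2} = {}"
  shows "(\<Sum>x\<in>Pi\<^sub>E I (\<lambda>_. U). (\<Prod>j\<in>I. q (x j))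
            * exp (c * (\<Sum>e\<in>M. if h (x (fst e)) = h (x (snd e)) then 1 else 0)))
       = (1 + collision_probability U q h * (exp c - 1)) ^ card M"
proof -
  have "exp (c * (\<Sum>e\<in>M. if h (x (fst e)) = h (x (snd e)) then 1 else 0))
      = (\<Prod>e\<in>M. exp (c * (if h (x (fst e)) = h (x (snd e)) then 1 else 0)))" for x
    by (simp add: sum_distrib_left exp_sum assms(1))
  then have "(\<Sum>x\<in>Pi\<^sub>E I (\<lambda>_. U). (\<Prod>j\<in>I. q (x j))
            * exp (c * (\<Sum>e\<in>M. if h (x (fst e)) = h (x (snd e)) then 1 else 0)))
      = (\<Sum>u\<in>U. \<Sum>v\<in>U. q u * q v * exp (c * (if h u = h v then 1 else 0))) ^ card M"
    using sum_PiE_prod_matching[OF assms, of "\<lambda>u v. exp (c * (if h u = h v then 1 else 0))"]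
    by simp
  then show ?thesis by (simp only: sum_exp_collision_indicator[OF assms(4)])
qed

lemma exp_le_one_plus_x_plus_sq:
  fixes c :: real
  assumes "c \<le> 1"
  shows "exp c \<le> 1 + c + c^2"
proof (cases "c \<ge> 0")
  case True then show ?thesis using exp_bound assms by auto
next
  case False
  define f where "f = - c"
  have f: "f > 0" using False f_def by auto
  have "1 - f + f^2 = (f - 1/2)^2 + 3/4" by (simp add: power2_eq_square algebra_simps)
  then have pos: "1 - f + f^2 > 0" using zero_le_power2[of "f - 1/2"] by linarith
  have "(1 - f + f^2) * (1 + f + f^2/2) = 1 + f^2/2 + f^3/2 + f^4/2"
    unfolding power2_eq_square power3_eq_cube power4_eq_xxxx by (simp add: field_simps)
  then have "1 \<le> (1 - f + f^2) * (1 + f + f^2/2)" using f by simp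
  also have "\<dots> \<le> (1 - f + f^2) * exp f"
    using exp_lower_Taylor_quadratic f pos by (intro mult_left_mono) auto
  finally have "exp (-f) \<le> 1 - f + f^2" by (simp add: exp_minus field_simps)
  then show ?thesis unfolding f_def by simp
qed

lemma matching_mgf_le:
  fixes U :: "'a set" and q :: "'a \<Rightarrow> real" and h :: "'a \<Rightarrow> 'b" and M :: "('i \<times> 'i) set"
  defines "p2 \<equiv> collision_probability U q h"
  assumes "finite M" "finite I" "finite U" "\<forall>u\<in>U. 0 \<le> q u" "(\<Sum>u\<in>U. q u) = 1"
    and "\<forall>e\<in>M. fst e \<in> I \<and> snd e \<in> I \<and> fst e \<noteq> snd e"
    and "\<forall>e1\<in>M. \<forall>e2\<in>M. e1 \<noteq> e2 \<longrightarrow> {fst e1, snd e1} \<inter> {fst e2, snd e2} = {}"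
    and p2_pos: "0 < p2" and M_ne: "M \<noteq> {}" and l_le: "l \<le> real (card M) * p2"
  shows "(\<Sum>x\<in>Pi\<^sub>E I (\<lambda>_. U). (\<Prod>j\<in>I. q (x j))
            * exp (l / (p2 * real (card M)) * (\<Sum>e\<in>M. if h (x (fst e)) = h (x (snd e)) then 1 else 0)))
         \<le> exp (l + l^2 / (p2 * real (card M)))"
proof -
  define r where "r = real (card M)"
  define c where "c = l / (p2 * r)"
  define B where "B = 1 + p2 * (exp c - 1)"
  have r_pos: "0 < r" using M_ne assms(2) by (simp add: r_def card_gt_0_iff)
  have "B = (\<Sum>u\<in>U. \<Sum>v\<in>U. q u * q v * exp (c * (if h u = h v then 1 else 0)))"
    by (simp only: sum_exp_collision_indicator[OF assms(6)] B_def p2_def)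
  then have B_nonneg: "0 \<le> B" using assms(5) by (simp add: sum_nonneg)
  have "B ^ card M \<le> exp (p2 * (exp c - 1)) ^ card M"
    using B_nonneg exp_ge_add_one_self[of "p2 * (exp c - 1)"] by (intro power_mono) (auto simp: B_def)
  also have "\<dots> = exp (r * (p2 * (exp c - 1)))" by (simp add: r_def exp_of_nat_mult)
  also have "r * (p2 * (exp c - 1)) \<le> r * (p2 * (c + c^2))"
  proof -
    have "c \<le> 1" using l_le r_pos p2_pos by (simp add: c_def r_def field_simps)
    then show ?thesis
      using exp_le_one_plus_x_plus_sq[of c] r_pos p2_pos by (intro mult_left_mono) auto
  qed
  also have "r * (p2 * (c + c^2)) = l + l^2 / (p2 * r)"
    using r_pos p2_pos by (simp add: c_def field_simps power2_eq_square)
  finally show ?thesis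
    using sum_PiE_exp_matching[OF assms(2-4,6-8), of c h] by (simp add: B_def c_def r_def p2_def)
qed

lemma sum_exp_convex_combination_le:
  fixes w :: "'x \<Rightarrow> real" and \<alpha> :: "'d \<Rightarrow> real"
  assumes "finite S" "finite D" "\<forall>x\<in>S. 0 \<le> w x" "\<forall>d\<in>D. 0 \<le> \<alpha> d" "(\<Sum>d\<in>D. \<alpha> d) = 1"
    and bound: "\<And>d. d \<in> D \<Longrightarrow> (\<Sum>x\<in>S. w x * exp (Y d x)) \<le> B"
  shows "(\<Sum>x\<in>S. w x * exp (\<Sum>d\<in>D. \<alpha> d * Y d x)) \<le> B"
proof -
  have "D \<noteq> {}" using assms(5) by auto
  then have "exp (\<Sum>d\<in>D. \<alpha> d *\<^sub>R Y d x) \<le> (\<Sum>d\<in>D. \<alpha> d * exp (Y d x))" for x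
    using assms(2,4,5) by (intro convex_on_sum[OF _ _ exp_convex]) auto
  then have "(\<Sum>x\<in>S. w x * exp (\<Sum>d\<in>D. \<alpha> d * Y d x)) \<le> (\<Sum>x\<in>S. w x * (\<Sum>d\<in>D. \<alpha> d * exp (Y d x)))"
    using assms(3) by (intro sum_mono mult_left_mono) auto
  also have "\<dots> = (\<Sum>d\<in>D. \<alpha> d * (\<Sum>x\<in>S. w x * exp (Y d x)))"
    by (simp add: sum_distrib_left algebra_simps sum.swap[of _ S])
  also have "\<dots> \<le> (\<Sum>d\<in>D. \<alpha> d * B)"
    using bound assms(4) by (intro sum_mono mult_left_mono) auto
  finally show ?thesis using assms(5) by (simp add: sum_distrib_right[symmetric])
qed

definition pairs_below :: "nat \<Rightarrow> (nat \<times> nat) set" where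
  "pairs_below m = (SIGMA b:{..<m}. {..<b})"

definition pair_class :: "nat \<Rightarrow> nat \<Rightarrow> (nat \<times> nat) set" where
  "pair_class m d = {p \<in> pairs_below m. (fst p + snd p) mod m = d}"

lemma finite_pairs_below [simp]: "finite (pairs_below m)"
  unfolding pairs_below_def by auto

lemma finite_pair_class [simp]: "finite (pair_class m d)"
  unfolding pair_class_def by auto

lemma sum_pairs_below: "(\<Sum>e\<in>pairs_below m. f e) = (\<Sum>b<m. \<Sum>a<b. f (b, a))"
  unfolding pairs_below_def by (simp add: sum.Sigma)

lemma card_pairs_below: "2 * card (pairs_below m) = m * (m - 1)"
proof -
  have "2 * (\<Sum>b<m. b) = m * (m - 1)" for m :: nat
  proof (induction m)
    case (Suc m) then show ?case by (cases m) (auto simp: algebra_simps)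
  qed simp
  then show ?thesis unfolding pairs_below_def by simp
qed

lemma sum_pair_classes:
  assumes "0 < m"
  shows "(\<Sum>d<m. \<Sum>e\<in>pair_class m d. f e) = (\<Sum>e\<in>pairs_below m. f e)"
  unfolding pair_class_def using assms by (intro sum.group) auto

lemma mod_add_left_cancel_less:
  fixes x y y' m :: nat
  assumes "(x + y) mod m = (x + y') mod m" "y < m" "y' < m"
  shows "y = y'"
  using assms by (metis cong_def cong_add_lcancel_nat cong_less_modulus_unique_nat)

lemma pair_class_disjoint:
  assumes "e1 \<in> pair_class m d" "e2 \<in> pair_class m d" "e1 \<noteq> e2"
  shows "{fst e1, snd e1} \<inter> {fst e2, snd e2} = {}"
proof (rule ccontr)
  assume meet: "{fst e1, snd e1} \<inter> {fst e2, snd e2} \<noteq> {}"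
  obtain b1 a1 b2 a2 where e: "e1 = (b1, a1)" "e2 = (b2, a2)" by fastforce
  have h: "a1 < b1" "b1 < m" "a2 < b2" "b2 < m" "(b1 + a1) mod m = (b2 + a2) mod m"
    using assms unfolding e pair_class_def pairs_below_def by auto
  consider "b1 = b2" | "b1 = a2" | "a1 = b2" | "a1 = a2" using meet e by auto
  then show False
  proof cases
    case 1
    then have "a1 = a2" using h mod_add_left_cancel_less[of b1 a1 m a2] by simp
    then show False using assms(3) 1 e by simp
  next
    case 2
    then have "a1 = b2" using h mod_add_left_cancel_less[of b1 a1 m b2] by (simp add: add.commute)
    then show False using h 2 by simp
  next
    case 3
    then have "b1 = a2" using h mod_add_left_cancel_less[of a1 b1 m a2] by (simp add: add.commute)
    then show False using h 3 by simp
  next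
    case 4
    then have "b1 = b2" using h mod_add_left_cancel_less[of a1 b1 m b2] by (simp add: add.commute)
    then show False using assms(3) 4 e by simp
  qed
qed

lemma pair_class_matching:
  shows "\<forall>e\<in>pair_class m d. fst e \<in> {..<m} \<and> snd e \<in> {..<m} \<and> fst e \<noteq> snd e"
    and "\<forall>e1\<in>pair_class m d. \<forall>e2\<in>pair_class m d. e1 \<noteq> e2 \<longrightarrow>
           {fst e1, snd e1} \<inter> {fst e2, snd e2} = {}"
  subgoal by (auto simp: pair_class_def pairs_below_def)
  subgoal using pair_class_disjoint by blast
  done

lemma card_double_mod_eq_le_2: "card {a::nat. a < m \<and> (a + a) mod m = d} \<le> 2"
proof (cases "{a. a < m \<and> (a + a) mod m = d} = {}")
  case True then show ?thesis by (simp only: True card.empty)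
next
  case False
  let ?F = "{a. a < m \<and> (a + a) mod m = d}"
  define a0 where "a0 = Min ?F"
  have fin: "finite ?F" by auto
  have a0F: "a0 \<in> ?F" unfolding a0_def using Min_in[OF fin False] .
  have "?F \<subseteq> {a0, a0 + m div 2}"
  proof
    fix a assume aF: "a \<in> ?F"
    have le: "a0 \<le> a" unfolding a0_def using aF fin by simp
    have "(a + a) mod m = (a0 + a0) mod m" using aF a0F by simp
    then have "m dvd (a + a) - (a0 + a0)" using le by (subst mod_eq_dvd_iff_nat[symmetric]) auto
    then obtain k where k: "(a + a) - (a0 + a0) = m * k" by auto
    have "m * k < m * 2" using aF unfolding k[symmetric] by auto
    then have "k < 2" by simp
    then have "k = 0 \<or> k = 1" by auto
    then show "a \<in> {a0, a0 + m div 2}" using k le by auto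
  qed
  then have "card ?F \<le> card {a0, a0 + m div 2}" by (intro card_mono) auto
  also have "\<dots> \<le> 2" by (simp add: card_insert_le_m1)
  finally show ?thesis .
qed

lemma mem_pair_class_endpoints:
  assumes "a < m" "d < m" "(a + a) mod m \<noteq> d"
  shows "a \<in> fst ` pair_class m d \<union> snd ` pair_class m d"
proof -
  define c where "c = (d + m - a) mod m"
  have c: "c < m" unfolding c_def using assms by auto
  have "(a + c) mod m = (a + (d + m - a)) mod m" unfolding c_def by (simp add: mod_add_right_eq)
  also have "a + (d + m - a) = d + m" using assms by auto
  finally have ac: "(a + c) mod m = d" using assms by simp
  then have "c \<noteq> a" using assms by auto
  then have "(c, a) \<in> pair_class m d \<or> (a, c) \<in> pair_class m d"
    using ac c assms unfolding pair_class_def pairs_below_def by (auto simp: add.commute)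
  then show ?thesis by force
qed

lemma card_pair_class_ge:
  assumes "d < m"
  shows "m \<le> 2 * card (pair_class m d) + 2"
proof -
  let ?F = "{a. a < m \<and> (a + a) mod m = d}"
  let ?A = "{a. a < m \<and> (a + a) mod m \<noteq> d}"
  have "card ?A \<le> card (fst ` pair_class m d \<union> snd ` pair_class m d)"
    using mem_pair_class_endpoints assms by (intro card_mono) auto
  also have "\<dots> \<le> card (fst ` pair_class m d) + card (snd ` pair_class m d)"
    by (rule card_Un_le)
  also have "\<dots> \<le> 2 * card (pair_class m d)"
    using card_image_le[of "pair_class m d" fst] card_image_le[of "pair_class m d" snd] by simp
  finally have A: "card ?A \<le> 2 * card (pair_class m d)" .
  have "{..<m} \<subseteq> ?A \<union> ?F" by auto
  then have "m \<le> card (?A \<union> ?F)" using card_mono[of "?A \<union> ?F" "{..<m}"] by simp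
  also have "\<dots> \<le> card ?A + card ?F" by (rule card_Un_le)
  finally show ?thesis using A card_double_mod_eq_le_2[of m d] by linarith
qed

definition collision_count :: "('a \<Rightarrow> 'b) \<Rightarrow> nat \<Rightarrow> (nat \<Rightarrow> 'a) \<Rightarrow> real" where
  "collision_count h m x = (\<Sum>b<m. \<Sum>a<b. if h (x a) = h (x b) then 1 else 0)"

lemma collision_count_eq_sum_pair_classes:
  assumes "0 < m"
  shows "collision_count h m x
       = (\<Sum>d<m. \<Sum>e\<in>pair_class m d. if h (x (fst e)) = h (x (snd e)) then 1 else 0)"
  unfolding collision_count_def sum_pair_classes[OF assms] sum_pairs_below
  by (intro sum.cong) auto

lemma kcount_Suc: "kcount h (Suc m) x i = kcount h m x i + (if h (x m) = i then 1 else 0)"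
proof -
  have "{j\<in>{..<Suc m}. h (x j) = i}
      = (if h (x m) = i then insert m {j\<in>{..<m}. h (x j) = i} else {j\<in>{..<m}. h (x j) = i})"
    by (auto simp: less_Suc_eq)
  then show ?thesis unfolding kcount_def by auto
qed

lemma sum_kcount_collisions:
  assumes "\<forall>j<m. h (x j) \<in> {1..n}"
  shows "(\<Sum>i=1..n. real (kcount h m x i) * (real (kcount h m x i) - 1)) = 2 * collision_count h m x"
  using assms
proof (induction m)
  case 0 then show ?case by (simp add: kcount_def collision_count_def)
next
  case (Suc m)
  let ?k = "\<lambda>i. real (kcount h m x i)"
  have step: "real (kcount h (Suc m) x i) * (real (kcount h (Suc m) x i) - 1)
      = ?k i * (?k i - 1) + (if i = h (x m) then 2 * ?k i else 0)" for i
    by (simp add: kcount_Suc algebra_simps)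
  have "?k (h (x m)) = (\<Sum>a<m. if h (x a) = h (x m) then 1 else 0)"
    unfolding kcount_def by (simp add: sum.inter_filter[symmetric])
  moreover have "h (x m) \<in> {1..n}" using Suc.prems by auto
  ultimately show ?case using Suc by (simp add: step sum.distrib collision_count_def)
qed

lemma collision_fraction_eq:
  assumes "\<forall>j<m. h (x j) \<in> {1..n}" "2 \<le> m"
  shows "(\<Sum>i=1..n. real (kcount h m x i) * (real (kcount h m x i) - 1) / (real m * (real m - 1)))
       = collision_count h m x / real (card (pairs_below m))"
proof -
  have pairs: "real m * (real m - 1) = 2 * real (card (pairs_below m))"
    using arg_cong[OF card_pairs_below[of m], of real] assms(2) by simp
  have "(\<Sum>i=1..n. real (kcount h m x i) * (real (kcount h m x i) - 1) / (real m * (real m - 1)))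
      = 2 * collision_count h m x / (real m * (real m - 1))"
    using sum_kcount_collisions[where h = h and x = x, OF assms(1)]
    by (simp add: sum_divide_distrib[symmetric])
  then show ?thesis unfolding pairs by simp
qed

lemma pair_class_mgf_le:
  fixes U :: "'a set" and q :: "'a \<Rightarrow> real" and h :: "'a \<Rightarrow> 'b" and m d :: nat
  defines "p2 \<equiv> collision_probability U q h" and "r \<equiv> real (card (pair_class m d))"
  assumes fin_U: "finite U" and q_nonneg: "\<forall>u\<in>U. 0 \<le> q u" and q_sum: "(\<Sum>u\<in>U. q u) = 1"
    and m: "3 \<le> m" and d: "d < m" and p2_pos: "0 < p2" and l_le: "l \<le> (real m - 2) / 2 * p2"
  shows "(\<Sum>x\<in>Pi\<^sub>E {..<m} (\<lambda>_. U). (\<Prod>j<m. q (x j))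
            * exp (l / (p2 * r) * (\<Sum>e\<in>pair_class m d. if h (x (fst e)) = h (x (snd e)) then 1 else 0)))
         \<le> exp (l + l^2 / ((real m - 2) / 2 * p2))"
proof -
  have r_ge: "(real m - 2) / 2 \<le> r" using card_pair_class_ge[OF d] by (simp add: r_def)
  moreover have "0 < (real m - 2) / 2" using m by simp
  ultimately have r_pos: "0 < r" by linarith
  have "l \<le> r * p2" using l_le r_ge p2_pos by (meson mult_right_mono order.trans less_imp_le)
  then have "(\<Sum>x\<in>Pi\<^sub>E {..<m} (\<lambda>_. U). (\<Prod>j<m. q (x j))
            * exp (l / (p2 * r) * (\<Sum>e\<in>pair_class m d. if h (x (fst e)) = h (x (snd e)) then 1 else 0)))
        \<le> exp (l + l^2 / (p2 * r))"
    using matching_mgf_le[OF finite_pair_class finite_lessThan fin_U q_nonneg q_sum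
        pair_class_matching, where h = h] r_pos p2_pos
    by (simp add: r_def p2_def card_gt_0_iff)
  also have "\<dots> \<le> exp (l + l^2 / ((real m - 2) / 2 * p2))"
  proof -
    have "(real m - 2) / 2 * p2 \<le> p2 * r" using r_ge p2_pos by (simp add: mult.commute)
    moreover have "0 < (real m - 2) / 2 * p2" using m p2_pos by simp
    ultimately have "l^2 / (p2 * r) \<le> l^2 / ((real m - 2) / 2 * p2)"
      by (intro divide_left_mono) auto
    then show ?thesis by simp
  qed
  finally show ?thesis .
qed

lemma collision_count_mgf_le:
  fixes U :: "'a set" and q :: "'a \<Rightarrow> real" and h :: "'a \<Rightarrow> 'b"
  defines "p2 \<equiv> collision_probability U q h"
  assumes fin_U: "finite U" and q_nonneg: "\<forall>u\<in>U. 0 \<le> q u" and q_sum: "(\<Sum>u\<in>U. q u) = 1"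
    and m: "3 \<le> m" and p2_pos: "0 < p2" and l_le: "l \<le> (real m - 2) / 2 * p2"
  shows "(\<Sum>x\<in>Pi\<^sub>E {..<m} (\<lambda>_. U). (\<Prod>j<m. q (x j))
            * exp (l * (collision_count h m x / (real (card (pairs_below m)) * p2))))
         \<le> exp (l + l^2 / ((real m - 2) / 2 * p2))"
proof -
  define r where "r = (\<lambda>d. real (card (pair_class m d)))"
  define R where "R = real (card (pairs_below m))"
  define Y where "Y = (\<lambda>d x. l / (p2 * r d)
                    * (\<Sum>e\<in>pair_class m d. if h (x (fst e)) = h (x (snd e)) then 1 else 0))"
  have r_pos: "0 < r d" if "d < m" for d
    using card_pair_class_ge[OF that] m by (simp add: r_def)
  have R_eq: "R = (\<Sum>d<m. r d)"
    using sum_pair_classes[of m "\<lambda>_. 1::real"] m by (simp add: R_def r_def)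
  have R_pos: "0 < R" unfolding R_eq using r_pos m by (intro sum_pos) (auto simp: lessThan_empty_iff)
  have convex_combination: "l * (collision_count h m x / (R * p2)) = (\<Sum>d<m. r d / R * Y d x)" for x
  proof -
    have "r d / R * Y d x = l / (R * p2)
             * (\<Sum>e\<in>pair_class m d. if h (x (fst e)) = h (x (snd e)) then 1 else 0)" if "d < m" for d
      using r_pos[OF that] p2_pos R_pos by (simp add: Y_def field_simps)
    then show ?thesis using m
      by (simp add: collision_count_eq_sum_pair_classes sum_distrib_left sum_divide_distrib)
  qed
  have "(\<Sum>x\<in>Pi\<^sub>E {..<m} (\<lambda>_. U). (\<Prod>j<m. q (x j))
          * exp (l * (collision_count h m x / (R * p2))))
      \<le> exp (l + l^2 / ((real m - 2) / 2 * p2))"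
    unfolding convex_combination Y_def r_def
    using fin_U q_nonneg r_pos R_pos R_eq p2_pos
      pair_class_mgf_le[OF fin_U q_nonneg q_sum m _ p2_pos[unfolded p2_def] l_le[unfolded p2_def]]
    by (intro sum_exp_convex_combination_le)
      (auto simp: p2_def r_def finite_PiE PiE_iff sum_divide_distrib[symmetric] less_imp_le
        intro!: prod_nonneg)
  then show ?thesis by (simp only: R_def)
qed

lemma slot_prob_eq_sum_if: "finite U \<Longrightarrow> slot_prob U q h i = (\<Sum>u\<in>U. if h u = i then q u else 0)"
  unfolding slot_prob_def by (simp add: sum.inter_filter)

lemma sum_slot_prob:
  assumes "finite U" "\<forall>u\<in>U. h u \<in> {1..n}"
  shows "(\<Sum>i=1..n. slot_prob U q h i) = (\<Sum>u\<in>U. q u)"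
  unfolding slot_prob_eq_sum_if[OF assms(1)]
  using assms(2) by (subst sum.swap) (simp add: eq_commute[of "h _"])

lemma norm_p_sq_eq_collision_probability:
  assumes "finite U" "\<forall>u\<in>U. h u \<in> {1..n}"
  shows "norm_p_sq U q h n = collision_probability U q h"
proof -
  let ?ind = "\<lambda>u i. if h u = i then 1 else (0::real)"
  have slot_indicator: "(\<Sum>i=1..n. ?ind u i * ?ind v i) = (if h u = h v then 1 else 0)"
    if "u \<in> U" for u v
  proof -
    have "(\<Sum>i=1..n. ?ind u i * ?ind v i) = (\<Sum>i\<in>{1..n}. if i = h u then ?ind v i else 0)"
      by (intro sum.cong) auto
    then show ?thesis using assms(2) that by auto
  qed
  have "norm_p_sq U q h n = (\<Sum>i=1..n. \<Sum>u\<in>U. \<Sum>v\<in>U. q u * q v * (?ind u i * ?ind v i))"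
    unfolding norm_p_sq_def slot_prob_eq_sum_if[OF assms(1)] power2_eq_square sum_product
    by (intro sum.cong) (auto simp: if_distrib)
  also have "\<dots> = (\<Sum>u\<in>U. \<Sum>v\<in>U. \<Sum>i=1..n. q u * q v * (?ind u i * ?ind v i))"
    by (subst sum.swap) (intro sum.cong refl sum.swap)
  also have "\<dots> = collision_probability U q h"
    unfolding collision_probability_def using slot_indicator by (simp add: sum_distrib_left[symmetric])
  finally show ?thesis .
qed

lemma sum_squares_ge_inverse_card:
  fixes p :: "'i \<Rightarrow> real"
  assumes "finite A" "(\<Sum>i\<in>A. p i) = 1"
  shows "1 / card A \<le> (\<Sum>i\<in>A. (p i)^2)"
proof -
  define c where "c = 1 / real (card A)"
  have "A \<noteq> {}" using assms(2) by auto
  then have "card A * c^2 = c" using assms(1) by (simp add: c_def power2_eq_square)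
  have "0 \<le> (\<Sum>i\<in>A. (p i - c)^2)" by (intro sum_nonneg) auto
  also have "\<dots> = (\<Sum>i\<in>A. (p i)^2) - 2 * c * (\<Sum>i\<in>A. p i) + card A * c^2"
    by (simp add: power2_diff sum.distrib sum_subtractf sum_distrib_left sum_distrib_right algebra_simps)
  finally show ?thesis using assms(2) \<open>card A * c^2 = c\<close> by (simp add: c_def)
qed

lemma norm_p_sq_ge_inverse:
  assumes "finite U" "\<forall>u\<in>U. h u \<in> {1..n}" "(\<Sum>u\<in>U. q u) = 1"
  shows "0 < n" and "1 / real n \<le> norm_p_sq U q h n"
proof -
  have "(\<Sum>i=1..n. slot_prob U q h i) = 1" using sum_slot_prob[OF assms(1,2)] assms(3) by simp
  then show "0 < n" "1 / real n \<le> norm_p_sq U q h n"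
    using sum_squares_ge_inverse_card[of "{1..n}"] by (auto simp: norm_p_sq_def intro: gr0I)
qed

(* For T \<le> 2 this is max over l of (l T - l^2/K) / K, attained at l = K T/2; for T > 2 it is
   the relaxation of the value at l = K allowed by the constraint l \<le> K. *)
definition chernoff_rate :: "real \<Rightarrow> real" where
  "chernoff_rate T = (if T \<le> 2 then T^2 / 4 else T / 2)"

lemma chernoff_rate_le_sq: "0 \<le> T \<Longrightarrow> chernoff_rate T \<le> T^2 / 4"
  by (auto simp: chernoff_rate_def power2_eq_square intro: order.trans[OF _ mult_right_mono])

lemma sum_filter_le_exp_moment:
  fixes w Y :: "'x \<Rightarrow> real"
  assumes "finite S" "\<forall>x\<in>S. 0 \<le> w x" "0 \<le> l"
  shows "(\<Sum>x\<in>{x\<in>S. t \<le> Y x}. w x) \<le> exp (- l * t) * (\<Sum>x\<in>S. w x * exp (l * Y x))"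
proof -
  have "w x \<le> w x * exp (l * (Y x - t))" if "x \<in> S" "t \<le> Y x" for x
    using assms that mult_left_mono[of 1 "exp (l * (Y x - t))" "w x"] by simp
  then have "(\<Sum>x\<in>{x\<in>S. t \<le> Y x}. w x) \<le> (\<Sum>x\<in>{x\<in>S. t \<le> Y x}. w x * exp (l * (Y x - t)))"
    by (intro sum_mono) auto
  also have "\<dots> \<le> (\<Sum>x\<in>S. w x * exp (l * (Y x - t)))"
    using assms by (intro sum_mono2) auto
  also have "\<dots> = exp (- l * t) * (\<Sum>x\<in>S. w x * exp (l * Y x))"
    by (simp add: sum_distrib_left exp_add[symmetric] algebra_simps)
  finally show ?thesis .
qed

context
  fixes S :: "'x set" and w X :: "'x \<Rightarrow> real" and K :: real
  assumes finite_S: "finite S" and w_nonneg: "\<forall>x\<in>S. 0 \<le> w x" and K_pos: "0 < K"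
    and mgf_le: "\<And>l. l \<le> K \<Longrightarrow> (\<Sum>x\<in>S. w x * exp (l * X x)) \<le> exp (l + l^2 / K)"
begin

lemma upper_tail_le:
  assumes "0 \<le> T"
  shows "(\<Sum>x\<in>{x\<in>S. 1 + T \<le> X x}. w x) \<le> exp (- K * chernoff_rate T)"
proof -
  define l where "l = K * min (T / 2) 1"
  have l: "0 \<le> l" "l \<le> K" using assms K_pos by (auto simp: l_def min_def)
  have exponent: "- l * (1 + T) + (l + l^2 / K) \<le> - K * chernoff_rate T"
  proof (cases "T \<le> 2")
    case True
    then show ?thesis using K_pos by (simp add: l_def chernoff_rate_def field_simps power2_eq_square)
  next
    case False
    then have "K * 2 \<le> K * T" using K_pos by (intro mult_left_mono) auto
    moreover have "- l * (1 + T) + (l + l^2 / K) = K - K * T"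
      using False K_pos by (simp add: l_def power2_eq_square algebra_simps)
    ultimately show ?thesis using False by (simp add: chernoff_rate_def)
  qed
  have "(\<Sum>x\<in>{x\<in>S. 1 + T \<le> X x}. w x) \<le> exp (- l * (1 + T)) * (\<Sum>x\<in>S. w x * exp (l * X x))"
    by (rule sum_filter_le_exp_moment[OF finite_S w_nonneg l(1)])
  also have "\<dots> \<le> exp (- l * (1 + T)) * exp (l + l^2 / K)"
    using mgf_le[OF l(2)] by (intro mult_left_mono) auto
  also have "\<dots> \<le> exp (- K * chernoff_rate T)"
    using exponent by (simp add: exp_add[symmetric])
  finally show ?thesis .
qed

lemma lower_tail_le:
  assumes "0 \<le> T"
  shows "(\<Sum>x\<in>{x\<in>S. X x \<le> 1 - T}. w x) \<le> exp (- K * chernoff_rate T)"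
proof -
  define l where "l = K * T / 2"
  have l: "0 \<le> l" using assms K_pos by (simp add: l_def)
  have "{x\<in>S. X x \<le> 1 - T} = {x\<in>S. T - 1 \<le> - X x}" by auto
  then have "(\<Sum>x\<in>{x\<in>S. X x \<le> 1 - T}. w x) \<le> exp (- l * (T - 1)) * (\<Sum>x\<in>S. w x * exp (- l * X x))"
    using sum_filter_le_exp_moment[OF finite_S w_nonneg l, of "T - 1" "\<lambda>x. - X x"] by simp
  also have "\<dots> \<le> exp (- l * (T - 1)) * exp (- l + l^2 / K)"
    using mgf_le[of "- l"] l K_pos by (intro mult_left_mono) auto
  also have "\<dots> = exp (- K * (T^2 / 4))"
    using K_pos by (simp add: exp_add[symmetric] l_def field_simps power2_eq_square)
  also have "\<dots> \<le> exp (- K * chernoff_rate T)"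
    using chernoff_rate_le_sq[OF assms] K_pos by simp
  finally show ?thesis .
qed

lemma two_sided_tail_le:
  assumes "0 \<le> T"
  shows "(\<Sum>x\<in>{x\<in>S. T < \<bar>X x - 1\<bar>}. w x) \<le> 2 * exp (- K * chernoff_rate T)"
proof -
  let ?up = "{x\<in>S. 1 + T \<le> X x}" and ?low = "{x\<in>S. X x \<le> 1 - T}"
  have "(\<Sum>x\<in>{x\<in>S. T < \<bar>X x - 1\<bar>}. w x) \<le> (\<Sum>x\<in>?up \<union> ?low. w x)"
    using finite_S w_nonneg by (intro sum_mono2) auto
  also have "\<dots> \<le> (\<Sum>x\<in>?up. w x) + (\<Sum>x\<in>?low. w x)"
    using finite_S w_nonneg by (simp add: sum_Un) (auto intro!: sum_nonneg)
  also have "\<dots> \<le> 2 * exp (- K * chernoff_rate T)"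
    using upper_tail_le[OF assms] lower_tail_le[OF assms] by simp
  finally show ?thesis .
qed

end

lemma collision_estimator_tail:
  fixes h :: "'a \<Rightarrow> nat"
  assumes fin_U: "finite U" and q_nonneg: "\<forall>u\<in>U. 0 \<le> q u" and q_sum: "(\<Sum>u\<in>U. q u) = 1"
    and h_range: "\<forall>u\<in>U. h u \<in> {1..n}" and m: "3 \<le> m" and T: "0 \<le> T"
  shows "1 - 2 * exp (- ((real m - 2) / 2 * norm_p_sq U q h n) * chernoff_rate T)
       \<le> prob_prod U q m
           (\<lambda>x. \<bar>(\<Sum>i=1..n. real (kcount h m x i) * (real (kcount h m x i) - 1)
                          / (real m * (real m - 1))) * (1 / norm_p_sq U q h n) - 1\<bar> \<le> T)"
proof -
  define P where "P = norm_p_sq U q h n"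
  define K where "K = (real m - 2) / 2 * P"
  define R where "R = real (card (pairs_below m))"
  define S where "S = Pi\<^sub>E {..<m} (\<lambda>_. U)"
  define w where "w = (\<lambda>x. \<Prod>j<m. q (x j))"
  define X where "X = (\<lambda>x. (\<Sum>i=1..n. real (kcount h m x i) * (real (kcount h m x i) - 1)
                          / (real m * (real m - 1))) * (1 / P))"
  have P_eq: "P = collision_probability U q h"
    using norm_p_sq_eq_collision_probability[OF fin_U h_range] by (simp add: P_def)
  have P_pos: "0 < P"
    using norm_p_sq_ge_inverse[OF fin_U h_range q_sum] unfolding P_def
    by (meson divide_pos_pos of_nat_0_less_iff order_less_le_trans zero_less_one)
  have K_pos: "0 < K" using m P_pos by (simp add: K_def)
  have X_eq: "X x = collision_count h m x / (R * P)" if "x \<in> S" for x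
  proof -
    have "\<forall>j<m. h (x j) \<in> {1..n}" using that h_range by (auto simp: S_def PiE_iff)
    then show ?thesis using collision_fraction_eq[of m h x n] m by (simp add: X_def R_def)
  qed
  have mgf: "(\<Sum>x\<in>S. w x * exp (l * X x)) \<le> exp (l + l^2 / K)" if "l \<le> K" for l
  proof -
    have "(\<Sum>x\<in>S. w x * exp (l * X x)) = (\<Sum>x\<in>S. w x * exp (l * (collision_count h m x / (R * P))))"
      using X_eq by (intro sum.cong) auto
    also have "\<dots> \<le> exp (l + l^2 / K)"
      using collision_count_mgf_le[OF fin_U q_nonneg q_sum m, of h l] that P_pos
      unfolding S_def w_def K_def R_def P_eq by simp
    finally show ?thesis .
  qed
  have "finite S" "\<forall>x\<in>S. 0 \<le> w x"
    using fin_U q_nonneg by (auto simp: S_def w_def finite_PiE PiE_iff intro!: prod_nonneg)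
  from two_sided_tail_le[OF this K_pos mgf T]
  have "prob_prod U q m (\<lambda>x. \<not> \<bar>X x - 1\<bar> \<le> T) \<le> 2 * exp (- K * chernoff_rate T)"
    unfolding prob_prod_def S_def w_def by (simp add: not_le)
  then have "1 - 2 * exp (- K * chernoff_rate T) \<le> prob_prod U q m (\<lambda>x. \<bar>X x - 1\<bar> \<le> T)"
    using prob_prod_not[OF fin_U q_sum, of m "\<lambda>x. \<bar>X x - 1\<bar> \<le> T"] by linarith
  then show ?thesis by (simp only: X_def K_def P_def)
qed

lemma chernoff_exponent_ge:
  fixes n a \<epsilon> s K :: real
  assumes n: "25 \<le> n" and a: "1 \<le> a" and \<epsilon>: "0 < \<epsilon>" "\<epsilon> < 1/3" and s: "0 < s"
    and K: "a^2 / (2 * \<epsilon>^2) - 1 / n \<le> K"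
  shows "s^2 / 4 + 1 \<le> K * chernoff_rate (\<epsilon> * (3 + 6 * s / a + 5 * s^2 * \<epsilon> / a^2))"
proof -
  define T where "T = \<epsilon> * (3 + 6 * s / a + 5 * s^2 * \<epsilon> / a^2)"
  define A where "A = a^2"
  define E where "E = \<epsilon>^2"
  have A: "1 \<le> A" using a by (simp add: A_def)
  have E: "0 < E" "E < 1/9"
    using \<epsilon> power_strict_mono[of \<epsilon> "1/3" 2] by (auto simp: E_def power2_eq_square)
  have u: "0 \<le> \<epsilon> * (6 * s / a)" and v: "0 \<le> \<epsilon> * (5 * s^2 * \<epsilon> / A)"
    using s a \<epsilon> A by auto
  have T_ge: "\<epsilon> * (3 + 6 * s / a) \<le> T" "\<epsilon> * (5 * s^2 * \<epsilon> / A) \<le> T"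
    using u v \<epsilon> by (simp_all add: T_def A_def distrib_left)
  have T_pos: "0 \<le> T" using T_ge(1) u \<epsilon> by (simp add: distrib_left)
  have "(A / (2 * E) - 1 / n) * chernoff_rate T \<le> K * chernoff_rate T"
    using K T_pos by (intro mult_right_mono) (auto simp: A_def E_def chernoff_rate_def)
  moreover have "s^2 / 4 + 1 \<le> (A / (2 * E) - 1 / n) * chernoff_rate T"
  proof (cases "T \<le> 2")
    case True
    have "(\<epsilon> * (3 + 6 * s / a))^2 = E * (9 + 36 * s^2 / A) + 36 * E * s / a"
      using a by (simp add: A_def E_def power2_eq_square field_simps)
    moreover have "0 \<le> 36 * E * s / a" using E s a by simp
    moreover have "(\<epsilon> * (3 + 6 * s / a))^2 \<le> T^2"
      using T_ge(1) \<epsilon> s a by (intro power_mono) auto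
    ultimately have "A / (2 * E) * (E * (9 + 36 * s^2 / A) / 4) \<le> A / (2 * E) * (T^2 / 4)"
      using A E by (intro mult_left_mono) auto
    moreover have "A / (2 * E) * (E * (9 + 36 * s^2 / A) / 4) = 9 * A / 8 + 9 * s^2 / 2"
      using A E by (simp add: field_simps)
    moreover have "T^2 / 4 / n \<le> 1 / 25"
      using True T_pos n power_mono[of T 2 2] by (simp add: field_simps)
    moreover have "(A / (2 * E) - 1 / n) * chernoff_rate T = A / (2 * E) * (T^2 / 4) - T^2 / 4 / n"
      using True by (simp add: chernoff_rate_def left_diff_distrib)
    ultimately show ?thesis using A zero_le_power2[of s] by linarith
  next
    case False
    define Q where "Q = A / E * T"
    have "9 \<le> A / E" using A E by (simp add: field_simps)
    then have "9 * T \<le> Q" using T_pos unfolding Q_def by (rule mult_right_mono)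
    moreover have "5 * s^2 \<le> Q"
      using T_ge(2) A E \<epsilon> by (simp add: Q_def E_def field_simps power2_eq_square)
    moreover have "T / (2 * n) \<le> T / 50" using n T_pos by (intro divide_left_mono) auto
    moreover have "(A / (2 * E) - 1 / n) * (T / 2) = Q / 4 - T / (2 * n)"
      using E n by (simp add: Q_def field_simps)
    ultimately show ?thesis using False by (simp add: chernoff_rate_def)
  qed
  ultimately show ?thesis unfolding T_def A_def E_def by linarith
qed

lemma sample_size_exponent_ge:
  fixes n m a \<epsilon> s P :: real
  assumes n: "25 \<le> n" and a: "1 \<le> a" and \<epsilon>: "0 < \<epsilon>" "\<epsilon> < 1/3" and s: "0 < s"
    and m: "m * \<epsilon>^2 = n * a^2" and P: "1 / n \<le> P"
  shows "3 \<le> m"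
    and "s^2 / 4 + 1 \<le> (m - 2) / 2 * P * chernoff_rate (\<epsilon> * (3 + 6 * s / a + 5 * s^2 * \<epsilon> / a^2))"
proof -
  have "m = n * a^2 / \<epsilon>^2" using m \<epsilon> by (simp add: field_simps)
  then have "0 \<le> m" using n by simp
  moreover have "\<epsilon>^2 \<le> 1" using \<epsilon> by (simp add: power_le_one)
  ultimately have "n * a^2 \<le> m" using m by (metis mult_left_le)
  moreover have "25 \<le> n * a^2" using mult_mono[OF n one_le_power[OF a, of 2]] n by simp
  ultimately show m3: "3 \<le> m" by simp
  have "(m - 2) / 2 * (1 / n) \<le> (m - 2) / 2 * P" using P m3 by (intro mult_left_mono) auto
  moreover have "(m - 2) / 2 * (1 / n) = a^2 / (2 * \<epsilon>^2) - 1 / n" using m n \<epsilon> by (simp add: field_simps)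
  ultimately have "a^2 / (2 * \<epsilon>^2) - 1 / n \<le> (m - 2) / 2 * P" by linarith
  then show "s^2 / 4 + 1 \<le> (m - 2) / 2 * P * chernoff_rate (\<epsilon> * (3 + 6 * s / a + 5 * s^2 * \<epsilon> / a^2))"
    by (rule chernoff_exponent_ge[OF n a \<epsilon> s])
qed

theorem theorem2:
  fixes U :: "'a set" and q :: "'a \<Rightarrow> real" and h :: "'a \<Rightarrow> nat"
    and n m :: nat and \<epsilon> \<delta> s :: real
  assumes finU: "finite U"
    and q_nonneg: "\<forall>u\<in>U. q u \<ge> 0"
    and q_sum: "(\<Sum>u\<in>U. q u) = 1"
    and h_range: "\<forall>u\<in>U. h u \<in> {1..n}"
    and n_gt: "n > 24"
    and eps_pos: "0 < \<epsilon>" and eps_lt: "\<epsilon> < 1/3"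
    and delta_pos: "\<delta> > 0"
    and s_pos: "s > 0"
    and m_def: "real m = \<epsilon> powr (-2) * real n powr (1 + \<delta>)"
  shows "prob_prod U q m
           (\<lambda>x. \<bar>(\<Sum>i=1..n. real (kcount h m x i) * (real (kcount h m x i) - 1)
                          / (real m * (real m - 1))) * (1 / norm_p_sq U q h n) - 1\<bar>
                \<le> \<epsilon> * (3 + 6 * s / real n powr (\<delta>/2) + 5 * s^2 * \<epsilon> / real n powr \<delta>))
         \<ge> 1 - 10/9 * exp (- (s^2) / 4)"
proof -
  define a where "a = real n powr (\<delta>/2)"
  define P where "P = norm_p_sq U q h n"
  define T where "T = \<epsilon> * (3 + 6 * s / a + 5 * s^2 * \<epsilon> / a^2)"
  have n: "25 \<le> real n" using n_gt by simp
  have a: "1 \<le> a" using n delta_pos by (simp add: a_def ge_one_powr_ge_zero)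
  have a_sq: "a^2 = real n powr \<delta>" by (simp add: a_def power2_eq_square powr_add[symmetric])
  have "real m * \<epsilon>^2 = real n * a^2"
    using m_def n eps_pos by (simp add: a_sq powr_add powr_minus field_simps)
  from sample_size_exponent_ge[OF n a eps_pos eps_lt s_pos this
      norm_p_sq_ge_inverse(2)[OF finU h_range q_sum]]
  have m: "3 \<le> m" and rate: "s^2 / 4 + 1 \<le> (real m - 2) / 2 * P * chernoff_rate T"
    by (simp_all add: P_def T_def)
  from rate have "2 * exp (- ((real m - 2) / 2 * P) * chernoff_rate T)
      \<le> 2 * exp (-1) * exp (- (s^2) / 4)"
    by (simp add: exp_add[symmetric])
  also have "\<dots> \<le> 10/9 * exp (- (s^2) / 4)"
    using exp_ge_add_one_self[of "1::real"] by (simp add: exp_minus field_simps)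
  finally have "1 - 10/9 * exp (- (s^2) / 4) \<le> prob_prod U q m
           (\<lambda>x. \<bar>(\<Sum>i=1..n. real (kcount h m x i) * (real (kcount h m x i) - 1)
                          / (real m * (real m - 1))) * (1 / P) - 1\<bar> \<le> T)"
    using collision_estimator_tail[OF finU q_nonneg q_sum h_range m, of T] eps_pos s_pos a
    by (simp add: P_def T_def)
  then show ?thesis unfolding P_def T_def a_sq unfolding a_def by simp
qed

end
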